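(* For all real $a$ and $y>0$, $$\frac{\Gamma(a,y)}{\Gamma(a-1,y)}<\frac12\left[y+a+\sqrt{(y-a)^2+4y}\right]$$ and $$\Gamma(a,y)>\frac{2y^a e^{-y}}{y+1-a+\sqrt{(y-a-1)^2+4y}}.$$
   Context: $\Gamma(a,y)=\int_y^{\infty} t^{a-1}e^{-t}\,dt$ is the upper incomplete gamma function, defined for all real $a$ when $y>0$. *)

theory Defs
  imports "HOL-Analysis.Analysis"
begin

definition upper_inc_gamma :: "real \<Rightarrow> real \<Rightarrow> real" where
  "upper_inc_gamma a y = integral {y..} (\<lambda>t. t powr (a - 1) * exp (- t))"

end

theory Submission
  imports Defs
begin

text \<open>Let \<open>f t = t powr (a - 1) * exp (- t)\<close> and let \<open>F\<close> be the claimed lower bound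
  \<open>2 t\<^sup>a e\<^sup>-\<^sup>t / P t\<close> with \<open>P t = t + 1 - a + sqrt ((t - a - 1)\<^sup>2 + 4 t)\<close>. Then \<open>F\<close> vanishes
  at infinity and \<open>f + F' > 0\<close>, so \<open>\<Gamma>(a, y) = \<integral>\<^sub>y\<^sup>\<infinity> f > \<integral>\<^sub>y\<^sup>\<infinity> - F' = F y\<close>. The bound on the
  ratio follows from the recurrence \<open>\<Gamma>(a, y) = (a - 1) \<Gamma>(a - 1, y) + y\<^sup>a\<^sup>-\<^sup>1 e\<^sup>-\<^sup>y\<close> and the
  lower bound for \<open>\<Gamma>(a - 1, y)\<close>.\<close>

lemma integral_FTC_atLeast:
  fixes g G :: "real \<Rightarrow> real"
  assumes g: "g absolutely_integrable_on {y..}"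
    and deriv: "\<And>t. t \<ge> y \<Longrightarrow> (G has_real_derivative g t) (at t)"
    and lim: "(G \<longlongrightarrow> L) at_top"
  shows "integral {y..} g = L - G y"
proof -
  have g_int: "g absolutely_integrable_on {y..x}" for x
    by (rule set_integrable_subset[OF g]) auto
  have "((\<lambda>x. LINT t:{y..x}|lebesgue. g t) \<longlongrightarrow> (LINT t:{y..}|lebesgue. g t)) at_top"
    by (rule tendsto_set_lebesgue_integral_at_top) (use g in auto)
  then have partial: "((\<lambda>x. integral {y..x} g) \<longlongrightarrow> integral {y..} g) at_top"
    using g g_int by (simp add: set_lebesgue_integral_eq_integral(2))
  have FTC: "integral {y..x} g = G x - G y" if "x \<ge> y" for x
    using that deriv
    by (intro integral_unique fundamental_theorem_of_calculus)
       (auto intro: has_field_derivative_at_within simp: has_real_derivative_iff_has_vector_derivative[symmetric])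
  have "((\<lambda>x. G x - G y) \<longlongrightarrow> L - G y) at_top"
    by (intro tendsto_intros lim)
  moreover have "\<forall>\<^sub>F x in at_top. G x - G y = integral {y..x} g"
    using eventually_ge_at_top[of y] by eventually_elim (simp add: FTC)
  ultimately have "((\<lambda>x. integral {y..x} g) \<longlongrightarrow> L - G y) at_top"
    by (rule Lim_transform_eventually)
  with partial show ?thesis
    by (rule tendsto_unique[OF trivial_limit_at_top_linorder])
qed

lemma integral_atLeast_gt_by_FTC:
  fixes f F F' :: "real \<Rightarrow> real"
  assumes f_int: "f integrable_on {y..}" and f_nonneg: "\<And>t. t \<ge> y \<Longrightarrow> f t \<ge> 0"
    and deriv: "\<And>t. t \<ge> y \<Longrightarrow> (F has_real_derivative F' t) (at t)"
    and cont: "continuous_on {y..} (\<lambda>t. f t + F' t)"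
    and pos: "\<And>t. t \<ge> y \<Longrightarrow> f t + F' t > 0"
    and lim: "(F \<longlongrightarrow> 0) at_top"
  shows "integral {y..} f > F y"
proof -
  define H where "H t = f t + F' t" for t
  have H_int: "H integrable_on {y..x}" for x
    using cont by (intro integrable_continuous_interval) (auto simp: H_def[abs_def] intro: continuous_on_subset)
  have "integral {y..y+1} (\<lambda>t. 0) < integral {y..y+1} H"
    using cont pos by (intro integral_less_real) (auto simp: H_def[abs_def] intro: continuous_on_subset)
  then have "\<forall>\<^sub>F x in at_top. F x < integral {y..y+1} H"
    by (intro order_tendstoD(2)[OF lim]) simp
  then obtain x where x: "x \<ge> y + 1" "F x < integral {y..y+1} H"
    by (metis eventually_at_top_linorder linorder_linear)
  have "(F' has_integral F x - F y) {y..x}"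
    using x deriv
    by (intro fundamental_theorem_of_calculus)
       (auto intro: has_field_derivative_at_within simp: has_real_derivative_iff_has_vector_derivative[symmetric])
  then have "((\<lambda>t. H t - F' t) has_integral integral {y..x} H - (F x - F y)) {y..x}"
    using H_int by (intro has_integral_diff) auto
  then have FTC: "integral {y..x} f = integral {y..x} H - (F x - F y)"
    by (simp add: H_def integral_unique)
  have "F y < F y + integral {y..y+1} H - F x"
    using x by simp
  also have "\<dots> \<le> F y + integral {y..x} H - F x"
    using x pos H_int by (simp, intro integral_subset_le) (auto simp: H_def less_imp_le)
  also have "\<dots> = integral {y..x} f"
    by (simp add: FTC)
  also have "\<dots> \<le> integral {y..} f"
    using f_int f_nonneg by (intro integral_subset_le integrable_on_subinterval[OF f_int]) auto
  finally show ?thesis .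
qed

lemma upper_inc_gamma_integrand_absolutely_integrable:
  fixes a y :: real
  assumes y: "y > 0"
  shows "(\<lambda>t. t powr (a - 1) * exp (- t)) absolutely_integrable_on {y..}"
proof -
  define b where "b = max a 1"
  have b: "b > 0" "a - b \<le> 0" by (auto simp: b_def)
  have "(\<lambda>t. t powr (b - 1) / exp t) integrable_on {0..}"
    using Gamma_integral_real[OF b(1)] by blast
  then have "(\<lambda>t. t powr (b - 1) / exp t) absolutely_integrable_on {0..}"
    by (rule nonnegative_absolutely_integrable_1) simp
  then have "(\<lambda>t. t powr (b - 1) / exp t) absolutely_integrable_on {y..}"
    by (rule set_integrable_subset) (use y in auto)
  then have "(\<lambda>t. y powr (a - b) * (t powr (b - 1) / exp t)) absolutely_integrable_on {y..}"
    by (rule set_integrable_mult_right)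
  then have "(\<lambda>t. y powr (a - b) * (t powr (b - 1) / exp t)) integrable_on {y..}"
    by (simp add: absolutely_integrable_on_def)
  moreover have "(\<lambda>t. t powr (a - 1) * exp (- t)) \<in> borel_measurable (lebesgue_on {y..})"
    using y by (intro continuous_imp_measurable_on_sets_lebesgue) (auto intro!: continuous_intros)
  moreover have "norm (t powr (a - 1) * exp (- t)) \<le> y powr (a - b) * (t powr (b - 1) / exp t)"
    if t: "t \<in> {y..}" for t
  proof -
    have "t powr (a - 1) = t powr (a - b) * t powr (b - 1)"
      by (simp add: powr_add[symmetric])
    also have "\<dots> \<le> y powr (a - b) * t powr (b - 1)"
      using t y b(2) by (intro mult_right_mono powr_mono2') auto
    finally show ?thesis
      by (simp add: exp_minus field_simps)
  qed
  ultimately show ?thesis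
    by (intro measurable_bounded_by_integrable_imp_absolutely_integrable) auto
qed

lemma upper_inc_gamma_recurrence:
  fixes a y :: real
  assumes y: "y > 0"
  shows "upper_inc_gamma a y = (a - 1) * upper_inc_gamma (a - 1) y + y powr (a - 1) * exp (- y)"
proof -
  define f where "f b t = t powr (b - 1) * exp (- t)" for b t :: real
  have gamma_f: "upper_inc_gamma b y = integral {y..} (f b)" for b
    by (simp add: upper_inc_gamma_def f_def[abs_def])
  have abs_int: "f b absolutely_integrable_on {y..}" for b
    unfolding f_def using upper_inc_gamma_integrand_absolutely_integrable[OF y] .
  then have int: "f b integrable_on {y..}" for b
    by (simp add: absolutely_integrable_on_def)
  have "integral {y..} (\<lambda>t. f a t - (a - 1) * f (a - 1) t) = 0 - (- f a y)"
  proof (rule integral_FTC_atLeast)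
    show "(\<lambda>t. f a t - (a - 1) * f (a - 1) t) absolutely_integrable_on {y..}"
      using abs_int by (intro set_integral_diff(1) set_integrable_mult_right)
    show "((\<lambda>t. - f a t) has_real_derivative f a t - (a - 1) * f (a - 1) t) (at t)" if "t \<ge> y" for t
      using that y unfolding f_def
      by (auto intro!: derivative_eq_intros simp: field_simps)
    show "((\<lambda>t. - f a t) \<longlongrightarrow> 0) at_top"
      unfolding f_def by real_asymp
  qed
  moreover have "integral {y..} (\<lambda>t. f a t - (a - 1) * f (a - 1) t)
      = upper_inc_gamma a y - (a - 1) * upper_inc_gamma (a - 1) y"
    using int by (simp add: integral_diff integrable_on_mult_right gamma_f)
  ultimately show ?thesis
    by (simp add: f_def)
qed

lemma mult_sqrt_square_add_less:
  fixes u t :: real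
  assumes "t > 0"
  shows "u * sqrt (u\<^sup>2 + 4 * t) < u\<^sup>2 + 2 * t"
proof -
  have "(u * sqrt (u\<^sup>2 + 4 * t))\<^sup>2 = u\<^sup>2 * (u\<^sup>2 + 4 * t)"
    using assms by (simp add: power_mult_distrib)
  also have "\<dots> < (u\<^sup>2 + 2 * t)\<^sup>2"
    using assms by (simp add: power2_eq_square algebra_simps)
  finally show ?thesis
    using assms by (smt (verit) power2_less_imp_less zero_le_power2)
qed

lemma sqrt_bound_denominator_gt_2:
  fixes a t :: real
  assumes "t > 0"
  shows "t + 1 - a + sqrt ((t - a - 1)\<^sup>2 + 4 * t) > 2"
proof -
  have "\<bar>t - a - 1\<bar> < sqrt ((t - a - 1)\<^sup>2 + 4 * t)"
    using assms by (intro real_less_rsqrt) (simp add: power2_abs)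
  then show ?thesis by simp
qed

text \<open>Multiplied by \<open>S (t + 1 - a + S)\<close>, the left-hand side becomes \<open>u\<^sup>2 + 2 t - u S\<close> with
  \<open>u = t - a - 1\<close>, which is positive because \<open>(u\<^sup>2 + 2 t)\<^sup>2 - (u S)\<^sup>2 = 4 t\<^sup>2\<close>.\<close>

lemma upper_inc_gamma_bound_slope_pos:
  fixes a t S :: real
  assumes t: "t > 0" and S: "S = sqrt ((t - a - 1)\<^sup>2 + 4 * t)"
  shows "1 + 2 * (a - t - t / S) / (t + 1 - a + S) > 0"
proof -
  define P where "P = t + 1 - a + S"
  have S_pos: "S > 0" and S_sq: "S\<^sup>2 = (t - a - 1)\<^sup>2 + 4 * t"
    using t by (auto simp: S add_nonneg_pos)
  have P_pos: "P > 0"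
    using sqrt_bound_denominator_gt_2[OF t, of a] by (simp add: P_def S)
  have "S * P + 2 * S * (a - t) - 2 * t = (t - a - 1)\<^sup>2 + 2 * t - (t - a - 1) * S"
    using S_sq by (simp add: P_def algebra_simps power2_eq_square)
  also have "\<dots> > 0"
    using mult_sqrt_square_add_less[OF t, of "t - a - 1"] by (simp add: S)
  finally have "(S * P + 2 * S * (a - t) - 2 * t) / (S * P) > 0"
    using S_pos P_pos by simp
  also have "(S * P + 2 * S * (a - t) - 2 * t) / (S * P) = 1 + 2 * (a - t - t / S) / P"
    using S_pos P_pos by (simp add: field_simps)
  finally show ?thesis
    by (simp add: P_def)
qed

lemma upper_inc_gamma_bound_tendsto_0:
  fixes a :: real
  shows "((\<lambda>t. 2 * t powr a * exp (- t) / (t + 1 - a + sqrt ((t - a - 1)\<^sup>2 + 4 * t))) \<longlongrightarrow> 0) at_top"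
    (is "(?F \<longlongrightarrow> 0) at_top")
proof (rule tendsto_sandwich)
  have F_bounds: "0 \<le> ?F t \<and> ?F t \<le> t powr a * exp (- t)" if "t > 0" for t
  proof -
    define P where "P = t + 1 - a + sqrt ((t - a - 1)\<^sup>2 + 4 * t)"
    have "P > 2"
      using sqrt_bound_denominator_gt_2[OF that] by (simp add: P_def)
    then have "2 * (t powr a * exp (- t)) \<le> P * (t powr a * exp (- t))"
      by (intro mult_right_mono) auto
    moreover have "?F t = 2 * (t powr a * exp (- t)) / P"
      by (simp add: P_def)
    ultimately show ?thesis
      using \<open>P > 2\<close> by (simp add: divide_le_eq mult.commute)
  qed
  show "\<forall>\<^sub>F t in at_top. 0 \<le> ?F t" "\<forall>\<^sub>F t in at_top. ?F t \<le> t powr a * exp (- t)"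
    using eventually_gt_at_top[of 0] by (eventually_elim, use F_bounds in blast)+
  show "((\<lambda>t. t powr a * exp (- t)) \<longlongrightarrow> 0) at_top"
    by real_asymp
qed simp

lemma upper_inc_gamma_gt_lower_bound:
  fixes a y :: real
  assumes y: "y > 0"
  shows "upper_inc_gamma a y > 2 * y powr a * exp (- y) / (y + 1 - a + sqrt ((y - a - 1)\<^sup>2 + 4 * y))"
proof -
  define S where "S t = sqrt ((t - a - 1)\<^sup>2 + 4 * t)" for t
  define P where "P t = t + 1 - a + S t" for t
  define f where "f t = t powr (a - 1) * exp (- t)" for t
  define F where "F t = 2 * t powr a * exp (- t) / P t" for t
  define F' where "F' t = 2 * f t * (a - t - t / S t) / P t" for t
  have S_pos: "S t > 0" if "t > 0" for t
    using that by (simp add: S_def add_nonneg_pos)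
  have P_pos: "P t > 0" if "t > 0" for t
    using sqrt_bound_denominator_gt_2[OF that, of a] by (simp add: P_def S_def)
  have S_deriv: "(S has_real_derivative (t - a + 1) / S t) (at t)" if "t > 0" for t
    using that S_pos[OF that] unfolding S_def[abs_def]
    by (auto intro!: derivative_eq_intros simp: S_def[symmetric] field_simps)
  have P_deriv: "(P has_real_derivative P t / S t) (at t)" if "t > 0" for t
  proof -
    have "1 + (t - a + 1) / S t = P t / S t"
      using S_pos[OF that] by (simp add: P_def field_simps)
    then show ?thesis
      unfolding P_def[abs_def] by (auto intro!: derivative_eq_intros S_deriv[OF that])
  qed
  have F_deriv: "(F has_real_derivative F' t) (at t)" if "t > 0" for t
    using that S_pos[OF that] P_pos[OF that] unfolding F_def[abs_def]
    by (auto intro!: derivative_eq_intros P_deriv simp: F'_def f_def powr_diff field_simps)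
  have pos: "f t + F' t > 0" if "t > 0" for t
  proof -
    have "f t + F' t = f t * (1 + 2 * (a - t - t / S t) / P t)"
      using P_pos[OF that] by (simp add: F'_def field_simps)
    moreover have "1 + 2 * (a - t - t / S t) / P t > 0"
      using upper_inc_gamma_bound_slope_pos[OF that] by (simp add: P_def S_def)
    ultimately show ?thesis
      using that by (simp add: f_def)
  qed
  have "continuous_on {y..} S" "continuous_on {y..} P"
    using y by (auto intro!: continuous_at_imp_continuous_on DERIV_isCont S_deriv P_deriv)
  then have cont: "continuous_on {y..} (\<lambda>t. f t + F' t)"
    using y S_pos P_pos unfolding f_def F'_def
    by (intro continuous_intros) (auto simp: less_imp_neq[symmetric])
  have lim: "(F \<longlongrightarrow> 0) at_top"
    using upper_inc_gamma_bound_tendsto_0[of a] by (simp add: F_def[abs_def] P_def S_def)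
  have f_int: "f integrable_on {y..}"
    using upper_inc_gamma_integrand_absolutely_integrable[OF y]
    by (simp add: absolutely_integrable_on_def f_def[abs_def])
  have "F y < integral {y..} f"
  proof (rule integral_atLeast_gt_by_FTC[OF f_int _ _ cont _ lim])
    fix t assume "y \<le> t"
    with y have "t > 0" by linarith
    then show "(F has_real_derivative F' t) (at t)" "f t + F' t > 0"
      by (fact F_deriv pos)+
    show "0 \<le> f t"
      by (simp add: f_def)
  qed
  then show ?thesis
    by (simp add: upper_inc_gamma_def F_def P_def S_def f_def[abs_def])
qed

theorem corollary8:
  fixes a y :: real
  assumes "y > 0"
  shows "upper_inc_gamma a y / upper_inc_gamma (a - 1) y
           < (y + a + sqrt ((y - a)\<^sup>2 + 4 * y)) / 2
         \<and> upper_inc_gamma a y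
           > 2 * y powr a * exp (- y) / (y + 1 - a + sqrt ((y - a - 1)\<^sup>2 + 4 * y))"
proof
  define R where "R = sqrt ((y - a)\<^sup>2 + 4 * y)"
  define e where "e = y powr (a - 1) * exp (- y)"
  define g where "g = upper_inc_gamma (a - 1) y"
  have bound: "2 * e / (y + 2 - a + R) < g"
    using upper_inc_gamma_gt_lower_bound[OF assms, of "a - 1"]
    by (simp add: e_def g_def R_def algebra_simps)
  have D: "y + 2 - a + R > 0"
    using real_sqrt_abs[of "y - a"] real_sqrt_le_mono[of "(y - a)\<^sup>2" "(y - a)\<^sup>2 + 4 * y"] assms
    by (simp add: R_def)
  have "e > 0"
    using assms by (simp add: e_def)
  then have g_pos: "g > 0"
    using bound D by (smt (verit) divide_pos_pos)
  with bound D have ratio: "e / g < (y + 2 - a + R) / 2"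
    by (simp add: field_simps)
  have "upper_inc_gamma a y = (a - 1) * g + e"
    unfolding g_def e_def by (rule upper_inc_gamma_recurrence[OF assms])
  then have "upper_inc_gamma a y / g = (a - 1) + e / g"
    using g_pos by (simp add: add_divide_distrib)
  also have "\<dots> < (y + a + R) / 2"
    using ratio by simp
  finally show "upper_inc_gamma a y / upper_inc_gamma (a - 1) y < (y + a + R) / 2"
    by (simp only: g_def)
  show "upper_inc_gamma a y > 2 * y powr a * exp (- y) / (y + 1 - a + sqrt ((y - a - 1)\<^sup>2 + 4 * y))"
    by (rule upper_inc_gamma_gt_lower_bound[OF assms])
qed

end
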